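(* Let $p\neq q$ be primes and let $G$ be a finite minimal non-abelian group with $G=PQ$, where $P$ is a cyclic Sylow $p$-subgroup of $G$ and $Q$ is an elementary abelian Sylow $q$-subgroup of $G$ which is a minimal normal subgroup of $G$. Then $\omega(G)=|Q|+1$.
   Context: A minimal non-abelian group is a non-abelian group all of whose proper subgroups are abelian. A subset $X$ of a group $G$ is a set of pairwise non-commuting elements if $xy\neq yx$ for any two distinct $x,y\in X$. For a finite non-abelian group $G$, $\omega(G)$ denotes the maximum cardinality of a set of pairwise non-commuting elements of $G$. *)

theory Defs
  imports "HOL-Algebra.Algebra"
begin

definition abelian_subset :: "('a, 'b) monoid_scheme \<Rightarrow> 'a set \<Rightarrow> bool" where
  "abelian_subset G H \<longleftrightarrow> (\<forall>x\<in>H. \<forall>y\<in>H. x \<otimes>\<^bsub>G\<^esub> y = y \<otimes>\<^bsub>G\<^esub> x)"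

definition minimal_nonabelian :: "('a, 'b) monoid_scheme \<Rightarrow> bool" where
  "minimal_nonabelian G \<longleftrightarrow> group G \<and> \<not> abelian_subset G (carrier G) \<and>
     (\<forall>H. subgroup H G \<and> H \<noteq> carrier G \<longrightarrow> abelian_subset G H)"

definition sylow_subgroup :: "('a, 'b) monoid_scheme \<Rightarrow> nat \<Rightarrow> 'a set \<Rightarrow> bool" where
  "sylow_subgroup G p H \<longleftrightarrow> subgroup H G \<and> card H = p ^ Factorial_Ring.multiplicity p (order G)"

definition elementary_abelian :: "('a, 'b) monoid_scheme \<Rightarrow> nat \<Rightarrow> 'a set \<Rightarrow> bool" where
  "elementary_abelian G p H \<longleftrightarrow> subgroup H G \<and> abelian_subset G H \<and>
     (\<forall>x\<in>H. x [^]\<^bsub>G\<^esub> p = \<one>\<^bsub>G\<^esub>)"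

definition minimal_normal :: "('a, 'b) monoid_scheme \<Rightarrow> 'a set \<Rightarrow> bool" where
  "minimal_normal G N \<longleftrightarrow> normal N G \<and> N \<noteq> {\<one>\<^bsub>G\<^esub>} \<and>
     (\<forall>M. normal M G \<and> M \<subseteq> N \<and> M \<noteq> {\<one>\<^bsub>G\<^esub>} \<longrightarrow> M = N)"

definition pairwise_noncommuting :: "('a, 'b) monoid_scheme \<Rightarrow> 'a set \<Rightarrow> bool" where
  "pairwise_noncommuting G S \<longleftrightarrow> S \<subseteq> carrier G \<and>
     (\<forall>x\<in>S. \<forall>y\<in>S. x \<noteq> y \<longrightarrow> x \<otimes>\<^bsub>G\<^esub> y \<noteq> y \<otimes>\<^bsub>G\<^esub> x)"

definition omega :: "('a, 'b) monoid_scheme \<Rightarrow> nat" where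
  "omega G = Max (card ` {S. pairwise_noncommuting G S})"

end

theory Submission
  imports Defs
begin

text \<open>
  Two facts drive the proof:
  x centralizes no nontrivial element of Q (the fixed points of x form a normal subgroup
  of G, and G is non-abelian), and x^p centralizes Q (Q<x^p> is a proper subgroup, hence
  abelian).  Then G is covered by the |Q| + 1 abelian subsets Q<x^p> and y<x>y\<inverse>
  (y \<in> Q), so by pigeonhole omega(G) \<le> |Q| + 1; conversely a nontrivial element of Q
  together with the |Q| conjugates y x y\<inverse> is pairwise non-commuting.
\<close>

lemma (in group) inv_mult_cancel_left [simp]:
  "x \<in> carrier G \<Longrightarrow> y \<in> carrier G \<Longrightarrow> inv x \<otimes> (x \<otimes> y) = y"
  by (simp add: m_assoc[symmetric])

lemma (in group) mult_inv_cancel_left [simp]: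
  "x \<in> carrier G \<Longrightarrow> y \<in> carrier G \<Longrightarrow> x \<otimes> (inv x \<otimes> y) = y"
  by (simp add: m_assoc[symmetric])

definition centralizer :: "('a, 'b) monoid_scheme \<Rightarrow> 'a \<Rightarrow> 'a set" where
  "centralizer G a = {g \<in> carrier G. a \<otimes>\<^bsub>G\<^esub> g = g \<otimes>\<^bsub>G\<^esub> a}"

lemma (in group) centralizer_subgroup:
  assumes a: "a \<in> carrier G"
  shows "subgroup (centralizer G a) G"
proof (rule subgroupI)
  show "centralizer G a \<subseteq> carrier G" "centralizer G a \<noteq> {}"
    using a by (auto simp: centralizer_def)
next
  fix g assume "g \<in> centralizer G a"
  then have g: "g \<in> carrier G" and comm: "a \<otimes> g = g \<otimes> a" by (auto simp: centralizer_def)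
  have "a \<otimes> inv g = inv g \<otimes> (g \<otimes> a) \<otimes> inv g" using a g by (simp add: m_assoc)
  also have "\<dots> = inv g \<otimes> (a \<otimes> g) \<otimes> inv g" by (simp only: comm)
  also have "\<dots> = inv g \<otimes> a" using a g by (simp add: m_assoc)
  finally show "inv g \<in> centralizer G a" using g by (simp add: centralizer_def)
next
  fix g h assume "g \<in> centralizer G a" "h \<in> centralizer G a"
  then have gh: "g \<in> carrier G" "h \<in> carrier G" and "a \<otimes> g = g \<otimes> a" "a \<otimes> h = h \<otimes> a"
    by (auto simp: centralizer_def)
  then have "a \<otimes> (g \<otimes> h) = g \<otimes> h \<otimes> a" using a by (metis m_assoc)
  then show "g \<otimes> h \<in> centralizer G a" using gh by (simp add: centralizer_def)
qed

lemma (in group) commute_int_pow: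
  assumes "a \<in> carrier G" "b \<in> carrier G" "a \<otimes> b = b \<otimes> a"
  shows "a [^] (k::int) \<otimes> b = b \<otimes> a [^] k"
proof -
  have "a \<in> centralizer G b" using assms by (simp add: centralizer_def)
  then have "a [^] k \<in> centralizer G b"
    by (rule subgroup_int_pow_closed[OF centralizer_subgroup[OF assms(2)]])
  then show ?thesis by (simp add: centralizer_def)
qed

lemma (in group) commute_mult:
  assumes "a \<in> carrier G" "b \<in> carrier G" "y \<in> carrier G"
    and "a \<otimes> y = y \<otimes> a" "b \<otimes> y = y \<otimes> b"
  shows "(a \<otimes> b) \<otimes> y = y \<otimes> (a \<otimes> b)"
proof -
  have "a \<otimes> b \<in> centralizer G y"
    using assms by (intro subgroup.m_closed[OF centralizer_subgroup]) (auto simp: centralizer_def)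
  then show ?thesis by (simp add: centralizer_def)
qed

lemma (in group) commute_products:
  assumes "u \<in> carrier G" "v \<in> carrier G" "c \<in> carrier G" "d \<in> carrier G"
    "u \<otimes> c = c \<otimes> u" "u \<otimes> d = d \<otimes> u" "v \<otimes> c = c \<otimes> v" "v \<otimes> d = d \<otimes> v"
  shows "(u \<otimes> v) \<otimes> (c \<otimes> d) = (c \<otimes> d) \<otimes> (u \<otimes> v)"
proof -
  have "(c \<otimes> d) \<otimes> u = u \<otimes> (c \<otimes> d)" "(c \<otimes> d) \<otimes> v = v \<otimes> (c \<otimes> d)"
    using assms by (simp_all add: commute_mult)
  then show ?thesis using assms by (intro commute_mult) auto
qed

lemma (in group) conj_commute_iff:
  assumes "g \<in> carrier G" "a \<in> carrier G" "b \<in> carrier G"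
  shows "(g \<otimes> a \<otimes> inv g) \<otimes> (g \<otimes> b \<otimes> inv g) = (g \<otimes> b \<otimes> inv g) \<otimes> (g \<otimes> a \<otimes> inv g)
         \<longleftrightarrow> a \<otimes> b = b \<otimes> a"
proof -
  have "(g \<otimes> a \<otimes> inv g) \<otimes> (g \<otimes> b \<otimes> inv g) = g \<otimes> (a \<otimes> b) \<otimes> inv g"
       "(g \<otimes> b \<otimes> inv g) \<otimes> (g \<otimes> a \<otimes> inv g) = g \<otimes> (b \<otimes> a) \<otimes> inv g"
    using assms by (simp_all add: m_assoc)
  moreover have "g \<otimes> (a \<otimes> b) \<otimes> inv g = g \<otimes> (b \<otimes> a) \<otimes> inv g \<longleftrightarrow> a \<otimes> b = b \<otimes> a"
    using assms by simp
  ultimately show ?thesis by simp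
qed

text \<open>Pigeonhole: a set of pairwise non-commuting elements meets every abelian subset at
  most once, so it is no larger than any family of abelian subsets covering it.\<close>

lemma card_noncommuting_le_cover:
  assumes S: "pairwise_noncommuting G S" and fin: "finite \<A>"
    and ab: "\<And>A. A \<in> \<A> \<Longrightarrow> abelian_subset G A" and cover: "S \<subseteq> \<Union>\<A>"
  shows "card S \<le> card \<A>"
proof -
  define f where "f s = (SOME A. A \<in> \<A> \<and> s \<in> A)" for s
  have f: "f s \<in> \<A> \<and> s \<in> f s" if "s \<in> S" for s
  proof -
    have "\<exists>A. A \<in> \<A> \<and> s \<in> A" using cover that by blast
    then show ?thesis unfolding f_def by (rule someI_ex)
  qed
  have "inj_on f S"
  proof (rule inj_onI, rule ccontr)
    fix s t assume st: "s \<in> S" "t \<in> S" "f s = f t" "s \<noteq> t"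
    have "s \<in> f s" "t \<in> f s" "f s \<in> \<A>"
      using f[OF st(1)] f[OF st(2)] st(3) by simp_all
    then have "s \<otimes>\<^bsub>G\<^esub> t = t \<otimes>\<^bsub>G\<^esub> s"
      using ab unfolding abelian_subset_def by simp
    moreover have "s \<otimes>\<^bsub>G\<^esub> t \<noteq> t \<otimes>\<^bsub>G\<^esub> s"
      using S st unfolding pairwise_noncommuting_def by simp
    ultimately show False by contradiction
  qed
  then have "card S = card (f ` S)" by (simp add: card_image)
  also have "\<dots> \<le> card \<A>" using f fin by (intro card_mono) auto
  finally show ?thesis .
qed

lemma omega_eqI:
  assumes fin: "finite (carrier G)"
    and upper: "\<And>S. pairwise_noncommuting G S \<Longrightarrow> card S \<le> n"
    and attained: "pairwise_noncommuting G S0" "card S0 = n"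
  shows "omega G = n"
  unfolding omega_def
proof (rule Max_eqI)
  have "{S. pairwise_noncommuting G S} \<subseteq> Pow (carrier G)"
    by (auto simp: pairwise_noncommuting_def)
  then show "finite (card ` {S. pairwise_noncommuting G S})"
    using fin by (meson finite_Pow_iff finite_imageI finite_subset)
  show "m \<le> n" if "m \<in> card ` {S. pairwise_noncommuting G S}" for m
    using that upper by blast
  show "n \<in> card ` {S. pairwise_noncommuting G S}"
    using attained by blast
qed

text \<open>If a centralizes no nontrivial element of the finite normal subgroup Q, then
  y \<mapsto> a\<inverse> y a y\<inverse> is injective on Q, hence onto Q; consequently every a y' (y' \<in> Q)
  is a Q-conjugate of a.\<close>

lemma (in group) fixed_point_free_twist:
  assumes Q: "Q \<lhd> G" "finite Q" and a: "a \<in> carrier G"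
    and fpf: "\<And>z. z \<in> Q \<Longrightarrow> a \<otimes> z = z \<otimes> a \<Longrightarrow> z = \<one>"
    and y': "y' \<in> Q"
  shows "\<exists>y\<in>Q. a \<otimes> y' = y \<otimes> a \<otimes> inv y"
proof -
  interpret Q: normal Q G by (rule Q(1))
  define c where "c y = inv a \<otimes> y \<otimes> a" for y
  have cQ: "c y \<in> Q" if "y \<in> Q" for y
    unfolding c_def using a that by (rule Q.inv_op_closed1)
  define \<phi> where "\<phi> y = c y \<otimes> inv y" for y
  have "\<phi> ` Q \<subseteq> Q"
    unfolding \<phi>_def using cQ by (auto intro: Q.m_closed Q.m_inv_closed)
  moreover have "inj_on \<phi> Q"
  proof (rule inj_onI)
    fix y1 y2 assume y: "y1 \<in> Q" "y2 \<in> Q" and eq: "\<phi> y1 = \<phi> y2"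
    define z where "z = inv y2 \<otimes> y1"
    have z: "z \<in> Q" unfolding z_def using y by (auto intro: Q.m_closed Q.m_inv_closed)
    have "c y1 = (c y1 \<otimes> inv y1) \<otimes> y1" using y cQ by (simp add: m_assoc)
    also have "\<dots> = c y2 \<otimes> inv y2 \<otimes> y1" using eq unfolding \<phi>_def by (simp only:)
    finally have "inv (c y2) \<otimes> c y1 = z" unfolding z_def using y cQ by (simp add: m_assoc)
    moreover have "c z = inv (c y2) \<otimes> c y1"
      unfolding c_def z_def using a y by (simp add: m_assoc inv_mult_group)
    ultimately have fixed: "inv a \<otimes> z \<otimes> a = z" unfolding c_def by (simp only:)
    have "a \<otimes> z = a \<otimes> (inv a \<otimes> z \<otimes> a)" by (simp only: fixed)
    also have "\<dots> = z \<otimes> a" using a z by (simp add: m_assoc)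
    finally have "z = \<one>" by (rule fpf[OF z])
    moreover have "y1 = y2 \<otimes> z" unfolding z_def using y by (simp add: Q.mem_carrier)
    ultimately show "y1 = y2" using y by simp
  qed
  ultimately have "\<phi> ` Q = Q" using Q(2) by (intro endo_inj_surj)
  then obtain y where y: "y \<in> Q" "y' = \<phi> y" using y' by blast
  then have "a \<otimes> y' = y \<otimes> a \<otimes> inv y" unfolding \<phi>_def c_def using a by (simp add: m_assoc)
  then show ?thesis using y by blast
qed

locale cyclic_fpf_extension = group G for G (structure) +
  fixes Q :: "'a set" and x :: 'a and p :: nat
  assumes finite_carrier: "finite (carrier G)"
    and Q_normal: "Q \<lhd> G"
    and Q_abelian: "\<And>a b. a \<in> Q \<Longrightarrow> b \<in> Q \<Longrightarrow> a \<otimes> b = b \<otimes> a"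
    and Q_nontrivial: "Q \<noteq> {\<one>}"
    and x_carrier: "x \<in> carrier G"
    and decomposition: "\<And>g. g \<in> carrier G \<Longrightarrow> \<exists>k::int. \<exists>y\<in>Q. g = x [^] k \<otimes> y"
    and fixed_point_free: "\<And>y. y \<in> Q \<Longrightarrow> x \<otimes> y = y \<otimes> x \<Longrightarrow> y = \<one>"
    and prime_p: "Factorial_Ring.prime p"
    and power_centralizes: "\<And>y. y \<in> Q \<Longrightarrow> x [^] int p \<otimes> y = y \<otimes> x [^] int p"
begin

interpretation Q: normal Q G by (rule Q_normal)

lemma Q_carrier [simp]: "y \<in> Q \<Longrightarrow> y \<in> carrier G"
  by (rule Q.mem_carrier)

lemma finite_Q: "finite Q"
  using finite_subset[OF Q.subset finite_carrier] .

text \<open>x is not in Q, since otherwise x would centralize the nontrivial abelian group Q.\<close>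

lemma x_notin_Q: "x \<notin> Q"
proof
  assume "x \<in> Q"
  then have "y = \<one>" if "y \<in> Q" for y
    using that Q_abelian fixed_point_free by blast
  then show False using Q_nontrivial Q.one_closed by blast
qed

lemma x_powers_commute: "x [^] (a::int) \<otimes> x [^] (b::int) = x [^] b \<otimes> x [^] a"
  using x_carrier by (simp add: int_pow_mult[symmetric] add.commute)

lemma p_multiple_centralizes:
  "y \<in> Q \<Longrightarrow> x [^] (int p * m) \<otimes> y = y \<otimes> x [^] (int p * m)"
  using commute_int_pow[of "x [^] int p" y m] power_centralizes x_carrier
  by (simp add: int_pow_pow)

text \<open>A power x^k with p not dividing k still acts without fixed points: by Bezout,
  x is a product of powers of x^p and x^k, so anything centralized by both is centralized by x.\<close>

lemma coprime_power_fixed_point_free: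
  assumes z: "z \<in> Q" and k: "\<not> int p dvd k" and comm: "x [^] k \<otimes> z = z \<otimes> x [^] k"
  shows "z = \<one>"
proof -
  have "coprime (int p) k"
    using prime_p k by (intro prime_imp_coprime) (simp_all add: prime_nat_int_transfer)
  then obtain u v where uv: "u * int p + v * k = 1"
    using bezout_int by (metis coprime_imp_gcd_eq_1)
  have C: "subgroup (centralizer G z) G" using z by (simp add: centralizer_subgroup)
  have "x [^] int p \<in> centralizer G z" "x [^] k \<in> centralizer G z"
    using z x_carrier power_centralizes[OF z] comm by (simp_all add: centralizer_def)
  then have "(x [^] int p) [^] u \<otimes> (x [^] k) [^] v \<in> centralizer G z"
    using subgroup_int_pow_closed[OF C] by (intro subgroup.m_closed[OF C]) blast+
  moreover have "(x [^] int p) [^] u \<otimes> (x [^] k) [^] v = x"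
    using x_carrier uv by (simp add: int_pow_pow int_pow_mult[symmetric] mult.commute)
  ultimately have "x \<otimes> z = z \<otimes> x" by (simp add: centralizer_def)
  then show ?thesis using fixed_point_free z by blast
qed

definition power_block :: "'a set" where
  "power_block = {x [^] (int p * m) \<otimes> y | m y. y \<in> Q}"

definition conj_cyclic :: "'a \<Rightarrow> 'a set" where
  "conj_cyclic y = range (\<lambda>k::int. y \<otimes> x [^] k \<otimes> inv y)"

lemma power_block_abelian: "abelian_subset G power_block"
  unfolding abelian_subset_def power_block_def
proof (clarify)
  fix a b :: int and y1 y2 assume y: "y1 \<in> Q" "y2 \<in> Q"
  show "x [^] (int p * a) \<otimes> y1 \<otimes> (x [^] (int p * b) \<otimes> y2)
      = x [^] (int p * b) \<otimes> y2 \<otimes> (x [^] (int p * a) \<otimes> y1)"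
    using y x_carrier by (intro commute_products)
      (simp_all add: x_powers_commute p_multiple_centralizes Q_abelian)
qed

lemma conj_cyclic_abelian: "y \<in> Q \<Longrightarrow> abelian_subset G (conj_cyclic y)"
  unfolding abelian_subset_def conj_cyclic_def
  using x_carrier by (auto simp: conj_commute_iff x_powers_commute)

text \<open>Every element x^k y lies in Q<x^p> when p divides k, and in a conjugate of <x> otherwise.\<close>

lemma carrier_covered: "carrier G \<subseteq> \<Union> (insert power_block (conj_cyclic ` Q))"
proof
  fix g assume "g \<in> carrier G"
  then obtain k y' where y': "y' \<in> Q" and g: "g = x [^] (k::int) \<otimes> y'"
    using decomposition by blast
  show "g \<in> \<Union> (insert power_block (conj_cyclic ` Q))"
  proof (cases "int p dvd k")
    case True
    then obtain m where "k = int p * m" by blast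
    then have "g \<in> power_block" unfolding power_block_def g using y' by blast
    then show ?thesis by blast
  next
    case False
    have "\<exists>y\<in>Q. x [^] k \<otimes> y' = y \<otimes> x [^] k \<otimes> inv y"
      using Q_normal finite_Q x_carrier coprime_power_fixed_point_free[OF _ False] y'
      by (intro fixed_point_free_twist) auto
    then obtain y where "y \<in> Q" "g \<in> conj_cyclic y"
      unfolding g conj_cyclic_def by blast
    then show ?thesis by blast
  qed
qed

lemma noncommuting_card_le: "pairwise_noncommuting G S \<Longrightarrow> card S \<le> card Q + 1"
proof -
  assume S: "pairwise_noncommuting G S"
  have "card S \<le> card (insert power_block (conj_cyclic ` Q))"
  proof (rule card_noncommuting_le_cover[OF S])
    show "finite (insert power_block (conj_cyclic ` Q))" using finite_Q by simp
    show "abelian_subset G A" if "A \<in> insert power_block (conj_cyclic ` Q)" for A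
      using that power_block_abelian conj_cyclic_abelian by blast
    show "S \<subseteq> \<Union> (insert power_block (conj_cyclic ` Q))"
      using S carrier_covered unfolding pairwise_noncommuting_def by blast
  qed
  also have "\<dots> \<le> card (conj_cyclic ` Q) + 1" by (simp add: card_insert_le_m1)
  also have "\<dots> \<le> card Q + 1" using finite_Q by (simp add: card_image_le)
  finally show ?thesis .
qed

definition conj_x :: "'a \<Rightarrow> 'a" where
  "conj_x y = y \<otimes> x \<otimes> inv y"

lemma conj_x_carrier [simp]: "y \<in> Q \<Longrightarrow> conj_x y \<in> carrier G"
  unfolding conj_x_def using x_carrier by simp

lemma conj_x_mult:
  "y \<in> Q \<Longrightarrow> z \<in> Q \<Longrightarrow> conj_x (y \<otimes> z) = y \<otimes> conj_x z \<otimes> inv y"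
  unfolding conj_x_def using x_carrier by (simp add: m_assoc inv_mult_group)

text \<open>Key fact: x commutes with its conjugate z x z\<inverse> (z \<in> Q) only for z = 1; write
  z x z\<inverse> = w x with w = z (x z\<inverse> x\<inverse>) \<in> Q and apply fixed-point freeness twice.\<close>

lemma conj_x_commutes_x:
  assumes z: "z \<in> Q" and comm: "x \<otimes> conj_x z = conj_x z \<otimes> x"
  shows "z = \<one>"
proof -
  define w where "w = z \<otimes> (x \<otimes> inv z \<otimes> inv x)"
  have w: "w \<in> Q"
    unfolding w_def using z x_carrier Q.inv_op_closed2[of x "inv z"] by (simp add: Q.m_closed Q.m_inv_closed)
  have cw: "conj_x z = w \<otimes> x"
    unfolding conj_x_def w_def using z x_carrier by (simp add: m_assoc)
  have "x \<otimes> w \<otimes> x = w \<otimes> x \<otimes> x"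
    using comm w x_carrier unfolding cw by (simp add: m_assoc)
  then have "x \<otimes> w = w \<otimes> x" using w x_carrier by simp
  then have "w = \<one>" by (rule fixed_point_free[OF w])
  then have "conj_x z = x" using cw x_carrier by simp
  then have "z \<otimes> x = x \<otimes> z"
    unfolding conj_x_def using z x_carrier by (metis inv_solve_right m_closed Q_carrier inv_closed)
  then show "z = \<one>" using fixed_point_free[OF z] by simp
qed

lemma conj_x_inj: "inj_on conj_x Q"
proof (rule inj_onI)
  fix y1 y2 assume y: "y1 \<in> Q" "y2 \<in> Q" and eq: "conj_x y1 = conj_x y2"
  define z where "z = inv y1 \<otimes> y2"
  have z: "z \<in> Q" and y2: "y2 = y1 \<otimes> z"
    unfolding z_def using y by (simp_all add: Q.m_closed Q.m_inv_closed)
  have "y1 \<otimes> x \<otimes> inv y1 = y1 \<otimes> conj_x z \<otimes> inv y1"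
    using eq conj_x_mult[OF y(1) z] unfolding y2 by (simp add: conj_x_def)
  then have "conj_x z = x" using y z x_carrier by simp
  then have "z = \<one>" using conj_x_commutes_x[OF z] by simp
  then show "y1 = y2" using y2 y by simp
qed

text \<open>Distinct Q-conjugates of x do not commute (conjugate back by y1).\<close>

lemma conj_x_noncommuting:
  assumes y: "y1 \<in> Q" "y2 \<in> Q" "y1 \<noteq> y2"
  shows "conj_x y1 \<otimes> conj_x y2 \<noteq> conj_x y2 \<otimes> conj_x y1"
proof
  assume comm: "conj_x y1 \<otimes> conj_x y2 = conj_x y2 \<otimes> conj_x y1"
  define z where "z = inv y1 \<otimes> y2"
  have z: "z \<in> Q" and y2: "y2 = y1 \<otimes> z"
    unfolding z_def using y by (simp_all add: Q.m_closed Q.m_inv_closed)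
  have "x \<otimes> conj_x z = conj_x z \<otimes> x"
    using comm conj_commute_iff[of y1 x "conj_x z"] x_carrier y z
    unfolding y2 conj_x_mult[OF y(1) z] by (simp add: conj_x_def)
  then have "z = \<one>" by (rule conj_x_commutes_x[OF z])
  then show False using y y2 by simp
qed

lemma Q_element_noncommuting:
  assumes q: "q \<in> Q" "q \<noteq> \<one>" and y: "y \<in> Q"
  shows "q \<otimes> conj_x y \<noteq> conj_x y \<otimes> q"
proof
  assume comm: "q \<otimes> conj_x y = conj_x y \<otimes> q"
  define w where "w = inv y \<otimes> q \<otimes> y"
  have w: "w \<in> Q" and q_eq: "q = y \<otimes> w \<otimes> inv y"
    unfolding w_def using q y Q.inv_op_closed1 by (simp_all add: m_assoc)
  have "w \<otimes> x = x \<otimes> w"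
    using comm conj_commute_iff[of y w x] x_carrier y w
    unfolding q_eq by (simp add: conj_x_def)
  then have "w = \<one>" using fixed_point_free[OF w] by simp
  then show False using q q_eq y by simp
qed

lemma noncommuting_set_exists: "\<exists>S. pairwise_noncommuting G S \<and> card S = card Q + 1"
proof -
  obtain q where q: "q \<in> Q" "q \<noteq> \<one>" using Q_nontrivial Q.one_closed by blast
  have q_new: "q \<notin> conj_x ` Q"
  proof
    assume "q \<in> conj_x ` Q"
    then obtain y where y: "y \<in> Q" "q = y \<otimes> x \<otimes> inv y" unfolding conj_x_def by blast
    then have "x = inv y \<otimes> q \<otimes> inv (inv y)" using x_carrier by (simp add: m_assoc)
    then have "x \<in> Q" using Q.inv_op_closed2[of "inv y" q] y q by simp
    then show False using x_notin_Q by contradiction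
  qed
  define S where "S = insert q (conj_x ` Q)"
  have "card S = card Q + 1"
    unfolding S_def using q_new finite_Q card_image[OF conj_x_inj] by simp
  moreover have "pairwise_noncommuting G S"
    unfolding pairwise_noncommuting_def
  proof (intro conjI ballI impI)
    show "S \<subseteq> carrier G" unfolding S_def using q by auto
    fix s t assume st: "s \<in> S" "t \<in> S" "s \<noteq> t"
    show "s \<otimes> t \<noteq> t \<otimes> s"
    proof (cases "s = q \<or> t = q")
      case True
      then obtain y where y: "y \<in> Q" "{s, t} = {q, conj_x y}"
        using st unfolding S_def by blast
      have "q \<otimes> conj_x y \<noteq> conj_x y \<otimes> q" by (rule Q_element_noncommuting[OF q y(1)])
      then show ?thesis using y(2) by (auto simp: doubleton_eq_iff)
    next
      case False
      then obtain y1 y2 where "y1 \<in> Q" "y2 \<in> Q" "s = conj_x y1" "t = conj_x y2"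
        using st unfolding S_def by blast
      then show ?thesis using conj_x_noncommuting st(3) by blast
    qed
  qed
  ultimately show ?thesis by blast
qed

theorem omega_eq: "omega G = card Q + 1"
  using finite_carrier noncommuting_card_le noncommuting_set_exists by (metis omega_eqI)

end

lemma (in group) cyclic_subgroup_generator:
  assumes "subgroup P G" and "cyclic_group (subgroup_generated G P)"
  obtains x where "x \<in> P" and "P = range (\<lambda>k::int. x [^] k)"
proof -
  interpret S: group "subgroup_generated G P" by (rule group_subgroup_generated)
  have carrier_P: "carrier (subgroup_generated G P) = P"
    using subgroup.carrier_subgroup_generated_subgroup[OF assms(1)] .
  obtain x where x: "x \<in> P" and gen: "P = range (\<lambda>k::int. x [^]\<^bsub>subgroup_generated G P\<^esub> k)"
    using assms(2) unfolding S.cyclic_group carrier_P by blast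
  have "x [^]\<^bsub>subgroup_generated G P\<^esub> k = x [^] k" for k :: int
    using x carrier_P int_pow_subgroup_generated by metis
  then show ?thesis using that x gen by simp
qed

lemma (in group) commute_with_decomposition:
  assumes decomp: "\<And>g. g \<in> carrier G \<Longrightarrow> \<exists>k::int. \<exists>y\<in>Q. g = x [^] k \<otimes> y"
    and Q: "Q \<subseteq> carrier G" and x: "x \<in> carrier G" and h: "h \<in> carrier G"
    and hx: "x \<otimes> h = h \<otimes> x" and hQ: "\<And>y. y \<in> Q \<Longrightarrow> y \<otimes> h = h \<otimes> y"
    and g: "g \<in> carrier G"
  shows "g \<otimes> h = h \<otimes> g"
proof -
  obtain k y where y: "y \<in> Q" and g_eq: "g = x [^] (k::int) \<otimes> y" using decomp[OF g] by blast
  have "x [^] k \<otimes> h = h \<otimes> x [^] k" using commute_int_pow[OF x h hx] .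
  then show ?thesis unfolding g_eq using x h y Q hQ[OF y] by (intro commute_mult) auto
qed

lemma (in group) abelian_if_generator_centralizes:
  assumes decomp: "\<And>g. g \<in> carrier G \<Longrightarrow> \<exists>k::int. \<exists>y\<in>Q. g = x [^] k \<otimes> y"
    and Q: "Q \<subseteq> carrier G" and x: "x \<in> carrier G"
    and Q_abelian: "\<And>a b. a \<in> Q \<Longrightarrow> b \<in> Q \<Longrightarrow> a \<otimes> b = b \<otimes> a"
    and central: "\<And>y. y \<in> Q \<Longrightarrow> x \<otimes> y = y \<otimes> x"
  shows "abelian_subset G (carrier G)"
  unfolding abelian_subset_def
proof (intro ballI)
  fix g h assume g: "g \<in> carrier G" and h: "h \<in> carrier G"
  obtain k y where y: "y \<in> Q" and h_eq: "h = x [^] (k::int) \<otimes> y" using decomp[OF h] by blast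
  have yc: "y \<in> carrier G" using y Q by blast
  have "h \<otimes> x = x \<otimes> h"
    unfolding h_eq using x yc commute_int_pow[OF x x refl, of k] central[OF y]
    by (intro commute_mult) simp_all
  moreover have "h \<otimes> z = z \<otimes> h" if z: "z \<in> Q" for z
    unfolding h_eq using x yc Q z commute_int_pow[OF x _ central[OF z], of k] Q_abelian[OF y z]
    by (intro commute_mult) auto
  ultimately show "g \<otimes> h = h \<otimes> g"
    using commute_with_decomposition[OF decomp Q x h _ _ g] by simp
qed

text \<open>The fixed points of x in Q form a normal subgroup of G = <x>Q, because they are central.\<close>

lemma (in group) fixed_points_normal:
  assumes decomp: "\<And>g. g \<in> carrier G \<Longrightarrow> \<exists>k::int. \<exists>y\<in>Q. g = x [^] k \<otimes> y"
    and Q: "Q \<lhd> G" and x: "x \<in> carrier G"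
    and Q_abelian: "\<And>a b. a \<in> Q \<Longrightarrow> b \<in> Q \<Longrightarrow> a \<otimes> b = b \<otimes> a"
  shows "{y \<in> Q. x \<otimes> y = y \<otimes> x} \<lhd> G"
  unfolding normal_inv_iff
proof
  interpret Q: normal Q G by (rule Q)
  have "{y \<in> Q. x \<otimes> y = y \<otimes> x} = Q \<inter> centralizer G x"
    by (auto simp: centralizer_def)
  then show "subgroup {y \<in> Q. x \<otimes> y = y \<otimes> x} G"
    using subgroups_Inter_pair[OF Q.subgroup_axioms centralizer_subgroup[OF x]] by simp
  show "\<forall>g\<in>carrier G. \<forall>h\<in>{y \<in> Q. x \<otimes> y = y \<otimes> x}. g \<otimes> h \<otimes> inv g \<in> {y \<in> Q. x \<otimes> y = y \<otimes> x}"
  proof (intro ballI)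
    fix g h assume g: "g \<in> carrier G" and h: "h \<in> {y \<in> Q. x \<otimes> y = y \<otimes> x}"
    then have hc: "h \<in> carrier G" by auto
    have "g \<otimes> h = h \<otimes> g"
      using h Q_abelian by (intro commute_with_decomposition[OF decomp Q.subset x hc _ _ g]) auto
    then have "g \<otimes> h \<otimes> inv g = h" using g hc by (simp add: m_assoc)
    then show "g \<otimes> h \<otimes> inv g \<in> {y \<in> Q. x \<otimes> y = y \<otimes> x}" using h by simp
  qed
qed

lemma (in group) card_subgroup_dvd:
  assumes "subgroup I G" "subgroup J G" "I \<subseteq> J"
  shows "card I dvd card J"
proof -
  interpret J: group "G\<lparr>carrier := J\<rparr>" using subgroup.subgroup_is_group[OF assms(2) is_group] .
  have "card (rcosets\<^bsub>G\<lparr>carrier := J\<rparr>\<^esub> I) * card I = card J"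
    using J.lagrange[OF subgroup_incl[OF assms]] by (simp add: order_def)
  then show ?thesis by (metis dvd_triv_right)
qed

lemma (in group) coprime_subgroups_inter:
  assumes H: "subgroup H G" and K: "subgroup K G" and coprime: "coprime (card H) (card K)"
  shows "H \<inter> K = {\<one>}"
proof -
  have HK: "subgroup (H \<inter> K) G" using subgroups_Inter_pair[OF H K] .
  have "card (H \<inter> K) dvd card H" "card (H \<inter> K) dvd card K"
    using card_subgroup_dvd[OF HK H] card_subgroup_dvd[OF HK K] by auto
  then have "card (H \<inter> K) = 1" using coprime by (metis coprime_common_divisor_nat)
  moreover have "\<one> \<in> H \<inter> K" using subgroup.one_closed[OF HK] .
  ultimately show ?thesis by (metis card_1_singletonE singletonD)
qed

text \<open>Minimal normality of Q forces x to act without nontrivial fixed points: the fixed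
  points form a normal subgroup, which cannot be all of Q since G is non-abelian.\<close>

lemma (in group) fixed_point_free_if_minimal_normal:
  assumes decomp: "\<And>g. g \<in> carrier G \<Longrightarrow> \<exists>k::int. \<exists>y\<in>Q. g = x [^] k \<otimes> y"
    and minimal: "minimal_normal G Q" and x: "x \<in> carrier G"
    and Q_abelian: "\<And>a b. a \<in> Q \<Longrightarrow> b \<in> Q \<Longrightarrow> a \<otimes> b = b \<otimes> a"
    and nonabelian: "\<not> abelian_subset G (carrier G)"
    and y: "y \<in> Q" and comm: "x \<otimes> y = y \<otimes> x"
  shows "y = \<one>"
proof -
  have Q: "Q \<lhd> G" using minimal by (simp add: minimal_normal_def)
  let ?C = "{y \<in> Q. x \<otimes> y = y \<otimes> x}"
  have "?C \<noteq> Q"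
    using abelian_if_generator_centralizes[OF decomp normal_imp_subgroup[OF Q, THEN subgroup.subset] x Q_abelian]
      nonabelian by blast
  moreover have "?C \<lhd> G" by (rule fixed_points_normal[OF decomp Q x Q_abelian])
  ultimately have "?C = {\<one>}"
    using minimal unfolding minimal_normal_def by blast
  moreover have "y \<in> ?C" using y comm by simp
  ultimately show ?thesis by simp
qed

text \<open>If <x> meets Q trivially and p divides the order of x, then x is not in Q<x^p>;
  so Q<x^p> is a proper, hence abelian, subgroup of the minimal non-abelian group G, and
  x^p centralizes Q.\<close>

lemma (in group) power_centralizes_if_minimal_nonabelian:
  assumes minimal: "minimal_nonabelian G" and Q: "Q \<lhd> G" and x: "x \<in> carrier G"
    and inter: "range (\<lambda>k::int. x [^] k) \<inter> Q = {\<one>}"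
    and p_dvd: "p dvd ord x" and prime: "Factorial_Ring.prime p" and y: "y \<in> Q"
  shows "x [^] int p \<otimes> y = y \<otimes> x [^] int p"
proof -
  interpret Q: normal Q G by (rule Q)
  define K where "K = generate G {x [^] int p}"
  have K: "subgroup K G" unfolding K_def using x by (intro generate_is_subgroup) auto
  define H where "H = Q <#> K"
  have H: "subgroup H G" unfolding H_def by (rule mult_norm_subgroup[OF Q K])
  have "x \<notin> H"
  proof
    assume "x \<in> H"
    then obtain z h where z: "z \<in> Q" and h: "h \<in> K" and x_eq: "x = z \<otimes> h"
      unfolding H_def set_mult_def by blast
    obtain m where h_eq: "h = x [^] (int p * m)"
      using h x unfolding K_def generate_pow[OF int_pow_closed[OF x]] by (auto simp: int_pow_pow)
    have "h \<in> carrier G" using subgroup.mem_carrier[OF K h] .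
    then have "x \<otimes> inv h = z" unfolding x_eq using z by (simp add: m_assoc)
    then have "z = x [^] (1 - int p * m)" using x h_eq by (simp add: int_pow_diff)
    then have "z \<in> range (\<lambda>k::int. x [^] k) \<inter> Q" using z by simp
    then have "x [^] (1 - int p * m) = \<one>" using inter \<open>z = x [^] (1 - int p * m)\<close> by simp
    then have "int p dvd 1 - int p * m"
      using p_dvd int_pow_eq_id[OF x] by (meson dvd_trans int_dvd_int_iff)
    then have "int p dvd (1 - int p * m) + int p * m" by (intro dvd_add) simp_all
    then have "p = 1" by simp
    then show False using prime by simp
  qed
  then have "abelian_subset G H"
    using minimal H x unfolding minimal_nonabelian_def by blast
  moreover have "y \<in> H" "x [^] int p \<in> H"
  proof -
    have mem: "a \<otimes> b \<in> H" if "a \<in> Q" "b \<in> K" for a b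
      unfolding H_def set_mult_def using that by blast
    have "x [^] int p \<in> K" unfolding K_def by (rule generate.incl) simp
    then show "y \<in> H" "x [^] int p \<in> H"
      using mem[OF y subgroup.one_closed[OF K]] mem[OF Q.one_closed, of "x [^] int p"] y x by simp_all
  qed
  ultimately show ?thesis unfolding abelian_subset_def by blast
qed

lemma (in group) fixed_point_free_nontrivial:
  assumes Q: "subgroup Q G" "Q \<noteq> {\<one>}"
    and fpf: "\<And>y. y \<in> Q \<Longrightarrow> x \<otimes> y = y \<otimes> x \<Longrightarrow> y = \<one>"
  shows "x \<noteq> \<one>"
proof
  assume "x = \<one>"
  then have "y = \<one>" if "y \<in> Q" for y
    using fpf[OF that] subgroup.mem_carrier[OF Q(1) that] by simp
  then show False using Q subgroup.one_closed[OF Q(1)] by blast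
qed

lemma (in group) prime_divides_generator_order:
  assumes x: "x \<in> carrier G" and P: "P = range (\<lambda>k::int. x [^] k)"
    and card_P: "card P = p ^ e" and x_ne: "x \<noteq> \<one>"
  shows "p dvd ord x"
proof -
  have ord: "ord x = card P"
    using generate_pow_card[OF x] generate_pow[OF x] P by (simp add: full_SetCompr_eq)
  have "e \<noteq> 0"
  proof
    assume "e = 0"
    then have "card P = 1" using card_P by simp
    moreover have "x \<in> P" "\<one> \<in> P" using P x by (auto intro: range_eqI[of _ _ 1] range_eqI[of _ _ 0])
    ultimately show False using x_ne by (metis card_1_singletonE singletonD)
  qed
  then show ?thesis using ord card_P by simp
qed

theorem theorem2p5:
  fixes G :: "('a, 'b) monoid_scheme" and p q :: nat and P Q :: "'a set"
  assumes "Factorial_Ring.prime p" and "Factorial_Ring.prime q" and "p \<noteq> q"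
    and "finite (carrier G)"
    and "minimal_nonabelian G"
    and "P <#>\<^bsub>G\<^esub> Q = carrier G"
    and "sylow_subgroup G p P" and "cyclic_group (subgroup_generated G P)"
    and "sylow_subgroup G q Q" and "elementary_abelian G q Q"
    and "minimal_normal G Q"
  shows "omega G = card Q + 1"
proof -
  interpret group G using assms(5) by (simp add: minimal_nonabelian_def)
  have P: "subgroup P G" "card P = p ^ multiplicity p (order G)"
    using assms(7) unfolding sylow_subgroup_def by blast+
  have Q: "subgroup Q G" "card Q = q ^ multiplicity q (order G)" "Q \<lhd> G" "Q \<noteq> {\<one>\<^bsub>G\<^esub>}"
    using assms(9,11) unfolding sylow_subgroup_def minimal_normal_def by blast+
  have Q_abelian: "\<And>a b. a \<in> Q \<Longrightarrow> b \<in> Q \<Longrightarrow> a \<otimes>\<^bsub>G\<^esub> b = b \<otimes>\<^bsub>G\<^esub> a"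
    using assms(10) unfolding elementary_abelian_def abelian_subset_def by blast
  have nonabelian: "\<not> abelian_subset G (carrier G)"
    using assms(5) unfolding minimal_nonabelian_def by blast
  obtain x where "x \<in> P" and P_eq: "P = range (\<lambda>k::int. x [^]\<^bsub>G\<^esub> k)"
    using cyclic_subgroup_generator[OF P(1) assms(8)] .
  then have x: "x \<in> carrier G" using subgroup.mem_carrier[OF P(1)] by blast
  have decomp: "\<exists>k::int. \<exists>y\<in>Q. g = x [^]\<^bsub>G\<^esub> k \<otimes>\<^bsub>G\<^esub> y" if "g \<in> carrier G" for g
    using that assms(6) unfolding P_eq set_mult_def by blast
  have fpf: "y = \<one>\<^bsub>G\<^esub>" if "y \<in> Q" and "x \<otimes>\<^bsub>G\<^esub> y = y \<otimes>\<^bsub>G\<^esub> x" for y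
    using fixed_point_free_if_minimal_normal[OF _ assms(11) x _ nonabelian that] decomp Q_abelian
    by blast
  have "x \<noteq> \<one>\<^bsub>G\<^esub>" using fixed_point_free_nontrivial[OF Q(1,4)] fpf by blast
  then have "p dvd ord x" using prime_divides_generator_order[OF x P_eq P(2)] by blast
  moreover have "P \<inter> Q = {\<one>\<^bsub>G\<^esub>}"
    using assms(1-3) P Q by (intro coprime_subgroups_inter) (simp_all add: primes_coprime)
  ultimately have power: "x [^]\<^bsub>G\<^esub> int p \<otimes>\<^bsub>G\<^esub> y = y \<otimes>\<^bsub>G\<^esub> x [^]\<^bsub>G\<^esub> int p"
    if "y \<in> Q" for y
    using power_centralizes_if_minimal_nonabelian[OF assms(5) Q(3) x _ _ assms(1) that] P_eq by blast
  interpret cyclic_fpf_extension G Q x p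
    by (intro cyclic_fpf_extension.intro cyclic_fpf_extension_axioms.intro is_group)
      (fact assms(1,4) Q(3,4) Q_abelian x decomp fpf power)+
  show ?thesis by (rule omega_eq)
qed

end
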